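(* Let $N=3$ and let $g,h,u_m,\alpha_1,\delta_h,\delta_q$ be real numbers. Let $\boldsymbol{A}_H\in\mathbb{R}^{6\times6}$ be the matrix $$\boldsymbol{A}_H=\begin{pmatrix}0&1&0&0&0&0\\ gh-u_m^2-\tfrac13\alpha_1^2&2u_m&\tfrac23\alpha_1&0&0&gh\\ -2u_m\alpha_1&2\alpha_1&u_m&\tfrac35\alpha_1&0&0\\ -\tfrac23\alpha_1^2&0&\tfrac13\alpha_1&u_m&\tfrac47\alpha_1&0\\ 0&0&0&\tfrac25\alpha_1&u_m&0\\ \delta_h&\delta_q&\delta_q&\delta_q&\delta_q&0\end{pmatrix}.$$ Then the eigenvalues of $\boldsymbol{A}_H$ are $\lambda_1,\lambda_2,\lambda_3$, the three roots of $$P_S(\lambda)=-\lambda\big((\lambda-u_m)^2-gh-\alpha_1^2\big)+gh(\delta_h+\lambda\delta_q+2\alpha_1\delta_q),$$ together with $\lambda_4=u_m$ and $\lambda_{5,6}=u_m\pm\sqrt{3/7}\,\alpha_1$.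
   Context: $\boldsymbol{A}_H$ is the system matrix of the third-order Hyperbolic Shallow Water Exner Moment model, with $h$ water height, $g$ gravity, $u_m$ mean velocity, $\alpha_1$ the first Legendre moment of the velocity profile, and $\delta_h=\partial_hQ_b$, $\delta_q=\partial_{hu_m}Q_b$ partial derivatives of the solid transport discharge; for the statement these are arbitrary real parameters. *)

theory Defs
  imports "Jordan_Normal_Form.Char_Poly"
begin

text \<open>System matrix A_H of the third-order HSWEM model (N = 3), 6x6, real entries,
  viewed over the complex numbers so that all eigenvalues exist.\<close>
definition A_H :: "real \<Rightarrow> real \<Rightarrow> real \<Rightarrow> real \<Rightarrow> real \<Rightarrow> real \<Rightarrow> complex mat" where
  "A_H g h um a1 dh dq = map_mat complex_of_real (mat_of_rows_list 6
     [[0, 1, 0, 0, 0, 0],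
      [g*h - um^2 - a1^2/3, 2*um, 2/3*a1, 0, 0, g*h],
      [-2*um*a1, 2*a1, um, 3/5*a1, 0, 0],
      [-2/3*a1^2, 0, a1/3, um, 4/7*a1, 0],
      [0, 0, 0, 2/5*a1, um, 0],
      [dh, dq, dq, dq, dq, 0]])"

definition P_S :: "real \<Rightarrow> real \<Rightarrow> real \<Rightarrow> real \<Rightarrow> real \<Rightarrow> real \<Rightarrow> complex \<Rightarrow> complex" where
  "P_S g h um a1 dh dq l =
     - l * ((l - of_real um)^2 - of_real (g*h) - of_real (a1^2))
     + of_real (g*h) * (of_real dh + l * of_real dq + 2 * of_real a1 * of_real dq)"

end

theory Submission imports Defs begin

text \<open>Cofactor expansion of \<open>det (\<lambda>I - A\<^sub>H)\<close> along the first row, carried out symbolically, gives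
  \<open>-P\<^sub>S(\<lambda>) (\<lambda> - u\<^sub>m) ((\<lambda> - u\<^sub>m)\<^sup>2 - 3/7 \<alpha>\<^sub>1\<^sup>2)\<close>. The last factor has the real roots
  \<open>u\<^sub>m \<plusminus> sqrt(3/7) \<alpha>\<^sub>1\<close>, and over \<open>\<complex>\<close> the monic cubic \<open>-P\<^sub>S\<close> splits into linear factors,
  which gives \<open>\<lambda>\<^sub>1, \<lambda>\<^sub>2, \<lambda>\<^sub>3\<close>.\<close>

lemma det_mat_Suc_first_row:
  fixes f :: "nat \<times> nat \<Rightarrow> 'a::comm_ring_1"
  shows "det (mat (Suc n) (Suc n) f) =
    (\<Sum>j<Suc n. f (0,j) * ((-1)^j * det (mat n n (\<lambda>(i,k). f (Suc i, if k < j then k else Suc k)))))"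
proof -
  have "det (mat (Suc n) (Suc n) f) =
      (\<Sum>j<Suc n. mat (Suc n) (Suc n) f $$ (0,j) * cofactor (mat (Suc n) (Suc n) f) 0 j)"
    by (rule laplace_expansion_row) auto
  also have "\<dots> = (\<Sum>j<Suc n. f (0,j) * ((-1)^j * det (mat n n (\<lambda>(i,k). f (Suc i, if k < j then k else Suc k)))))"
  proof (rule sum.cong[OF refl])
    fix j assume j: "j \<in> {..<Suc n}"
    have "mat_delete (mat (Suc n) (Suc n) f) 0 j = mat n n (\<lambda>(i,k). f (Suc i, if k < j then k else Suc k))"
      unfolding mat_delete_def by (rule eq_matI) auto
    with j show "mat (Suc n) (Suc n) f $$ (0,j) * cofactor (mat (Suc n) (Suc n) f) 0 j =
        f (0,j) * ((-1)^j * det (mat n n (\<lambda>(i,k). f (Suc i, if k < j then k else Suc k))))"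
      unfolding cofactor_def by simp
  qed
  finally show ?thesis .
qed

definition remove_nth :: "nat \<Rightarrow> 'a list \<Rightarrow> 'a list" where
  "remove_nth j xs = take j xs @ drop (Suc j) xs"

lemma remove_nth_simps [simp]:
  "remove_nth 0 (x # xs) = xs"
  "remove_nth (Suc j) (x # xs) = x # remove_nth j xs"
  "remove_nth j [] = []"
  by (simp_all add: remove_nth_def)

lemma length_remove_nth [simp]:
  "length (remove_nth j xs) = (if j < length xs then length xs - 1 else length xs)"
  unfolding remove_nth_def by auto

lemma nth_remove_nth:
  "k < length xs - 1 \<Longrightarrow> remove_nth j xs ! k = xs ! (if k < j then k else Suc k)"
  unfolding remove_nth_def by (auto simp: nth_append min_def)

text \<open>On a concrete list of rows this unfolds by simplification alone, unlike \<^const>\<open>det\<close>.\<close>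
fun laplace_det :: "'a::comm_ring_1 list list \<Rightarrow> 'a" where
  "laplace_det [] = 1"
| "laplace_det (r # rs) = (\<Sum>j<length r. r ! j * ((-1)^j * laplace_det (map (remove_nth j) rs)))"

lemma det_mat_of_rows_list:
  assumes "length rs = n" and "\<forall>r\<in>set rs. length r = n"
  shows "det (mat_of_rows_list n rs) = laplace_det rs"
  using assms
proof (induction n arbitrary: rs)
  case 0
  then show ?case by (simp add: mat_of_rows_list_def det_def')
next
  case (Suc m)
  then obtain r rs' where rs: "rs = r # rs'" by (cases rs) auto
  have minor: "mat m m (\<lambda>(i,k). rs ! Suc i ! (if k < j then k else Suc k))
      = mat_of_rows_list m (map (remove_nth j) rs')" if "j < Suc m" for j
    using Suc.prems rs that by (intro eq_matI) (auto simp: mat_of_rows_list_def nth_remove_nth)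
  have IH: "det (mat_of_rows_list m (map (remove_nth j) rs')) = laplace_det (map (remove_nth j) rs')"
    if "j < Suc m" for j
    using Suc.prems rs that by (intro Suc.IH) auto
  show ?case
    using Suc.prems rs minor IH
    by (auto simp: mat_of_rows_list_def det_mat_Suc_first_row intro!: sum.cong)
qed

definition char_matrix_rows :: "'a::field \<Rightarrow> 'a \<Rightarrow> 'a \<Rightarrow> 'a \<Rightarrow> 'a \<Rightarrow> 'a \<Rightarrow> 'a list list" where
  "char_matrix_rows x G U a Dh Dq =
   [[x, -1, 0, 0, 0, 0],
    [-(G - U^2 - a^2/3), x - 2*U, -2/3*a, 0, 0, -G],
    [2*U*a, -2*a, x - U, -3/5*a, 0, 0],
    [2/3*a^2, 0, -a/3, x - U, -4/7*a, 0],
    [0, 0, 0, -2/5*a, x - U, 0],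
    [-Dh, -Dq, -Dq, -Dq, -Dq, x]]"

lemma laplace_det_char_matrix_rows:
  fixes x G U a Dh Dq :: "'a::field_char_0"
  shows "laplace_det (char_matrix_rows x G U a Dh Dq)
   = (x^3 + (-2*U) * x^2 + (U^2 - G - a^2 - G*Dq) * x + - (G * (Dh + 2*a*Dq)))
     * (x - U) * ((x - U)^2 - 3/7*a^2)"
  unfolding char_matrix_rows_def
  by (simp add: lessThan_Suc numeral_nat) (simp add: field_simps, algebra)

lemma P_S_cubic:
  "P_S g h um a1 dh dq x = - (x^3 + (-2 * of_real um) * x^2
     + ((of_real um)^2 - of_real (g*h) - (of_real a1)^2 - of_real (g*h) * of_real dq) * x
     + - (of_real (g*h) * (of_real dh + 2 * of_real a1 * of_real dq)))"
  unfolding P_S_def by (simp add: algebra_simps power2_eq_square power3_eq_cube)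

lemma neg_char_matrix_A_H:
  "- char_matrix (A_H g h um a1 dh dq) x = mat_of_rows_list 6
     (char_matrix_rows x (of_real (g*h)) (of_real um) (of_real a1) (of_real dh) (of_real dq))"
  (is "_ = ?M")
proof (rule eq_matI)
  fix i j assume "i < dim_row ?M" "j < dim_col ?M"
  then have "i \<in> {0,1,2,3,4,5}" "j \<in> {0,1,2,3,4,5}"
    by (auto simp: mat_of_rows_list_def char_matrix_rows_def)
  then show "(- char_matrix (A_H g h um a1 dh dq) x) $$ (i, j) = ?M $$ (i, j)"
    by (auto simp: char_matrix_def A_H_def mat_of_rows_list_def char_matrix_rows_def)
qed (auto simp: char_matrix_def A_H_def mat_of_rows_list_def char_matrix_rows_def)

lemma poly_char_poly_A_H:
  "poly (char_poly (A_H g h um a1 dh dq)) x =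
     - P_S g h um a1 dh dq x * (x - of_real um) * ((x - of_real um)^2 - 3/7 * (of_real a1)^2)"
proof -
  have A: "A_H g h um a1 dh dq \<in> carrier_mat 6 6"
    unfolding A_H_def mat_of_rows_list_def by (rule carrier_matI) simp_all
  have "poly (char_poly (A_H g h um a1 dh dq)) x =
      det (mat_of_rows_list 6 (char_matrix_rows x (of_real (g*h)) (of_real um) (of_real a1) (of_real dh) (of_real dq)))"
    by (simp only: char_poly_matrix[OF A] neg_char_matrix_A_H)
  also have "\<dots> = laplace_det (char_matrix_rows x (of_real (g*h)) (of_real um) (of_real a1) (of_real dh) (of_real dq))"
    by (rule det_mat_of_rows_list) (simp_all add: char_matrix_rows_def)
  also have "\<dots> = - P_S g h um a1 dh dq x * (x - of_real um) * ((x - of_real um)^2 - 3/7 * (of_real a1)^2)"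
    unfolding laplace_det_char_matrix_rows P_S_cubic minus_minus ..
  finally show ?thesis .
qed

lemma monic_cubic_splits:
  fixes c0 c1 c2 :: complex
  shows "\<exists>l1 l2 l3. \<forall>x. x^3 + c2 * x^2 + c1 * x + c0 = (x - l1) * (x - l2) * (x - l3)"
proof -
  let ?q = "[:c0, c1, c2, 1:]"
  have deg: "degree ?q = 3" "coeff ?q 3 = 1"
    by (simp_all add: numeral_3_eq_3)
  obtain ls where ls: "Polynomial.smult (coeff ?q (degree ?q)) (\<Prod>l\<leftarrow>ls. [:-l, 1:]) = ?q"
    and "length ls = degree ?q"
    using fundamental_theorem_algebra_factorized by blast
  then obtain l1 l2 l3 where "ls = [l1, l2, l3]"
    using deg by (cases ls; cases "tl ls"; cases "tl (tl ls)") (auto simp: numeral_3_eq_3)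
  with ls have factored: "?q = [:-l1, 1:] * [:-l2, 1:] * [:-l3, 1:]"
    unfolding deg by (simp del: pCons_eq_iff mult_pCons_left mult_pCons_right add: mult.assoc)
  show ?thesis
  proof (intro exI allI)
    fix x :: complex
    have "x^3 + c2 * x^2 + c1 * x + c0 = poly ?q x"
      by (simp add: algebra_simps power2_eq_square power3_eq_cube)
    also have "\<dots> = (x - l1) * (x - l2) * (x - l3)"
      unfolding factored by (simp add: algebra_simps)
    finally show "x^3 + c2 * x^2 + c1 * x + c0 = (x - l1) * (x - l2) * (x - l3)" .
  qed
qed

lemma char_poly_A_H_factors:
  assumes P_S: "\<forall>l. P_S g h um a1 dh dq l = - ((l - l1) * (l - l2) * (l - l3))"
  shows "char_poly (A_H g h um a1 dh dq) =
       [:-l1, 1:] * [:-l2, 1:] * [:-l3, 1:] * [:- complex_of_real um, 1:]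
       * [:- complex_of_real (um + sqrt (3/7) * a1), 1:]
       * [:- complex_of_real (um - sqrt (3/7) * a1), 1:]" (is "_ = ?rhs")
proof (rule poly_eq_poly_eq_iff[THEN iffD1], rule ext)
  fix x
  have "complex_of_real (sqrt (3/7)) ^ 2 = 3/7"
    by (metis of_real_power real_sqrt_pow2 of_real_divide of_real_numeral less_eq_real_def
        divide_pos_pos zero_less_numeral)
  then have quadratic:
    "(x - complex_of_real (um + sqrt (3/7) * a1)) * (x - complex_of_real (um - sqrt (3/7) * a1))
      = (x - of_real um)^2 - 3/7 * (of_real a1)^2"
    by (simp add: algebra_simps power2_eq_square)
  have "poly ?rhs x = (x - l1) * (x - l2) * (x - l3) * (x - of_real um)
      * ((x - complex_of_real (um + sqrt (3/7) * a1)) * (x - complex_of_real (um - sqrt (3/7) * a1)))"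
    by (simp only: poly_mult poly_pCons poly_0) (simp add: algebra_simps)
  then show "poly (char_poly (A_H g h um a1 dh dq)) x = poly ?rhs x"
    unfolding poly_char_poly_A_H P_S[rule_format] quadratic by simp
qed

theorem corollary1:
  fixes g h um a1 dh dq :: real
  shows "\<exists>l1 l2 l3 :: complex.
     (\<forall>l. P_S g h um a1 dh dq l = - ((l - l1) * (l - l2) * (l - l3))) \<and>
     char_poly (A_H g h um a1 dh dq) =
       [:-l1, 1:] * [:-l2, 1:] * [:-l3, 1:] * [:- complex_of_real um, 1:]
       * [:- complex_of_real (um + sqrt (3/7) * a1), 1:]
       * [:- complex_of_real (um - sqrt (3/7) * a1), 1:]"
proof -
  obtain l1 l2 l3 where "\<forall>l. P_S g h um a1 dh dq l = - ((l - l1) * (l - l2) * (l - l3))"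
    using monic_cubic_splits unfolding P_S_cubic by (metis (no_types, lifting))
  with char_poly_A_H_factors show ?thesis
    by blast
qed

end
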